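(* If $G$ is a graph without universal vertices, then $\eta(G\lor K_1)=\eta(G)$.
   Context: All graphs are finite, simple and undirected. A vertex $v$ of $G$ is universal if $N(v)=V(G)\setminus\{v\}$, where $N(v)$ is its set of neighbours. $K_1$ is the graph with a single vertex. For disjoint graphs $G_1,G_2$, the join $G_1\lor G_2$ has vertex set $V(G_1)\cup V(G_2)$ and edge set $E(G_1)\cup E(G_2)\cup\{(u,v):u\in V(G_1),v\in V(G_2)\}$. For a positive integer $k$, $[k]=\{1,\dots,k\}$. For a labeling $f:V(G)\to[k]$ and $S\subseteq V(G)$, $f(S)=\sum_{u\in S}f(u)$. A labeling $f:V(G)\to[k]$ is an additive $k$-coloring if $f(N(u))\neq f(N(v))$ for every edge $(u,v)$ of $G$. The additive chromatic number $\eta(G)$ is the least $k$ for which $G$ has an additive $k$-coloring. *)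

theory Defs
  imports Main
begin

definition simple_graph :: "'a set \<Rightarrow> ('a \<Rightarrow> 'a \<Rightarrow> bool) \<Rightarrow> bool" where
  "simple_graph V E \<longleftrightarrow> finite V \<and> (\<forall>u v. E u v \<longrightarrow> E v u)
     \<and> (\<forall>u. \<not> E u u) \<and> (\<forall>u v. E u v \<longrightarrow> u \<in> V \<and> v \<in> V)"

definition nbhd :: "'a set \<Rightarrow> ('a \<Rightarrow> 'a \<Rightarrow> bool) \<Rightarrow> 'a \<Rightarrow> 'a set" where
  "nbhd V E u = {v \<in> V. E u v}"

definition universal :: "'a set \<Rightarrow> ('a \<Rightarrow> 'a \<Rightarrow> bool) \<Rightarrow> 'a \<Rightarrow> bool" where
  "universal V E v \<longleftrightarrow> v \<in> V \<and> nbhd V E v = V - {v}"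

definition additive_coloring :: "'a set \<Rightarrow> ('a \<Rightarrow> 'a \<Rightarrow> bool) \<Rightarrow> nat \<Rightarrow> ('a \<Rightarrow> nat) \<Rightarrow> bool" where
  "additive_coloring V E k f \<longleftrightarrow> (\<forall>u\<in>V. f u \<in> {1..k})
     \<and> (\<forall>u v. E u v \<longrightarrow> sum f (nbhd V E u) \<noteq> sum f (nbhd V E v))"

definition additive_chromatic :: "'a set \<Rightarrow> ('a \<Rightarrow> 'a \<Rightarrow> bool) \<Rightarrow> nat" where
  "additive_chromatic V E = (LEAST k. k \<ge> 1 \<and> (\<exists>f. additive_coloring V E k f))"

text \<open>Join G \<or> K_1: the old vertices are tagged with Some, the new vertex is None.\<close>
definition join_K1_V :: "'a set \<Rightarrow> 'a option set" where
  "join_K1_V V = insert None (Some ` V)"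

fun join_K1_E :: "'a set \<Rightarrow> ('a \<Rightarrow> 'a \<Rightarrow> bool) \<Rightarrow> 'a option \<Rightarrow> 'a option \<Rightarrow> bool" where
  "join_K1_E V E (Some x) (Some y) = E x y"
| "join_K1_E V E None (Some y) = (y \<in> V)"
| "join_K1_E V E (Some x) None = (x \<in> V)"
| "join_K1_E V E None None = False"

end

theory Submission
  imports Defs
begin

text \<open>In the join every old vertex gains the apex as a neighbour, so all old neighbourhood
sums shift by the same amount, the apex label: additive colourings of the join restrict
to colourings of G. Conversely, label the apex 1. Its neighbourhood sum is the total
label sum of G, and since no vertex y of G is universal, this total counts y and some
non-neighbour of y besides the neighbours of y, so it exceeds the join-sum 1 + f(N(y))
of y.\<close>

lemma simple_graph_nbhd_subset:
  assumes "simple_graph V E"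
  shows "nbhd V E y \<subseteq> V - {y}"
  using assms unfolding simple_graph_def nbhd_def by auto

lemma simple_graph_finite_nbhd:
  assumes "simple_graph V E"
  shows "finite (nbhd V E y)"
  using assms unfolding simple_graph_def nbhd_def by simp

lemma nbhd_join_K1_Some:
  assumes "simple_graph V E" "x \<in> V"
  shows "nbhd (join_K1_V V) (join_K1_E V E) (Some x) = insert None (Some ` nbhd V E x)"
  using assms unfolding nbhd_def join_K1_V_def simple_graph_def by auto

lemma nbhd_join_K1_None: "nbhd (join_K1_V V) (join_K1_E V E) None = Some ` V"
  unfolding nbhd_def join_K1_V_def by auto

lemma sum_nbhd_join_K1_Some:
  assumes "simple_graph V E" "x \<in> V"
  shows "sum g (nbhd (join_K1_V V) (join_K1_E V E) (Some x))
           = g None + sum (g \<circ> Some) (nbhd V E x)"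
  unfolding nbhd_join_K1_Some[OF assms]
  using simple_graph_finite_nbhd[OF assms(1)] by (simp add: sum.reindex)

lemma sum_nbhd_join_K1_None:
  "sum g (nbhd (join_K1_V V) (join_K1_E V E) None) = sum (g \<circ> Some) V"
  by (simp add: nbhd_join_K1_None sum.reindex)

lemma sum_nbhd_add_two_le_sum:
  fixes f :: "'a \<Rightarrow> nat"
  assumes G: "simple_graph V E" and y: "y \<in> V" and "\<not> universal V E y"
    and pos: "\<forall>u\<in>V. f u \<ge> 1"
  shows "sum f (nbhd V E y) + 2 \<le> sum f V"
proof -
  have sub: "nbhd V E y \<subseteq> V - {y}" using simple_graph_nbhd_subset[OF G] .
  moreover have "nbhd V E y \<noteq> V - {y}" using assms(3) y unfolding universal_def by auto
  ultimately obtain z where z: "z \<in> V" "z \<noteq> y" "z \<notin> nbhd V E y" by blast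
  have "y \<notin> nbhd V E y" using sub by blast
  with simple_graph_finite_nbhd[OF G] z
  have "sum f (nbhd V E y) + f y + f z = sum f (insert y (insert z (nbhd V E y)))"
    by simp
  also have "\<dots> \<le> sum f V"
    using G sub y z unfolding simple_graph_def by (intro sum_mono2) auto
  moreover have "f y \<ge> 1" "f z \<ge> 1" using pos y z by auto
  ultimately show ?thesis by linarith
qed

lemma additive_coloring_join_K1_restrict:
  assumes G: "simple_graph V E"
    and g: "additive_coloring (join_K1_V V) (join_K1_E V E) k g"
  shows "additive_coloring V E k (g \<circ> Some)"
  unfolding additive_coloring_def
proof (intro conjI ballI allI impI)
  show "(g \<circ> Some) u \<in> {1..k}" if "u \<in> V" for u
    using g that unfolding additive_coloring_def join_K1_V_def by simp
next
  fix u v assume uv: "E u v"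
  then have "u \<in> V" "v \<in> V" using G unfolding simple_graph_def by auto
  moreover have "sum g (nbhd (join_K1_V V) (join_K1_E V E) (Some u))
               \<noteq> sum g (nbhd (join_K1_V V) (join_K1_E V E) (Some v))"
    using g uv unfolding additive_coloring_def by (metis join_K1_E.simps(1))
  ultimately show "sum (g \<circ> Some) (nbhd V E u) \<noteq> sum (g \<circ> Some) (nbhd V E v)"
    by (simp only: sum_nbhd_join_K1_Some[OF G])
qed

lemma additive_coloring_join_K1_extend:
  assumes G: "simple_graph V E" and nu: "\<forall>v\<in>V. \<not> universal V E v"
    and f: "additive_coloring V E k f" and k: "k \<ge> 1"
  shows "additive_coloring (join_K1_V V) (join_K1_E V E) k (case_option 1 f)"
proof -
  let ?V' = "join_K1_V V" and ?E' = "join_K1_E V E" and ?g = "case_option 1 f"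
  have lab: "\<forall>u\<in>V. f u \<in> {1..k}"
    and ed: "\<And>u v. E u v \<Longrightarrow> sum f (nbhd V E u) \<noteq> sum f (nbhd V E v)"
    using f unfolding additive_coloring_def by auto
  have Some_sum: "sum ?g (nbhd ?V' ?E' (Some y)) = 1 + sum f (nbhd V E y)" if "y \<in> V" for y
    unfolding sum_nbhd_join_K1_Some[OF G that] by (simp add: comp_def)
  have None_sum: "sum ?g (nbhd ?V' ?E' None) = sum f V"
    unfolding sum_nbhd_join_K1_None by (simp add: comp_def)
  have apex_gt: "sum ?g (nbhd ?V' ?E' (Some y)) < sum ?g (nbhd ?V' ?E' None)" if "y \<in> V" for y
    using sum_nbhd_add_two_le_sum[OF G that] nu lab that Some_sum None_sum by fastforce
  have adjacent: "sum ?g (nbhd ?V' ?E' u) \<noteq> sum ?g (nbhd ?V' ?E' v)" if e: "?E' u v" for u v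
  proof (cases u; cases v)
    fix x y assume "u = Some x" "v = Some y"
    moreover from this e have "E x y" by simp
    moreover from this G have "x \<in> V" "y \<in> V" unfolding simple_graph_def by auto
    ultimately show ?thesis using ed by (simp add: Some_sum)
  next
    fix y assume uv: "u = None" "v = Some y"
    with e have "y \<in> V" by simp
    show ?thesis
      unfolding uv using less_imp_neq[OF apex_gt[OF \<open>y \<in> V\<close>]] by (rule not_sym)
  next
    fix x assume uv: "u = Some x" "v = None"
    with e have "x \<in> V" by simp
    show ?thesis
      unfolding uv using less_imp_neq[OF apex_gt[OF \<open>x \<in> V\<close>]] .
  next
    assume "u = None" "v = None"
    with e show ?thesis by simp
  qed
  have "\<forall>u\<in>?V'. ?g u \<in> {1..k}" using lab k unfolding join_K1_V_def by auto
  with adjacent show ?thesis unfolding additive_coloring_def by (intro conjI allI impI)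
qed

theorem mainTheorem5:
  fixes V :: "'a set" and E :: "'a \<Rightarrow> 'a \<Rightarrow> bool"
  assumes "simple_graph V E"
    and "\<forall>v\<in>V. \<not> universal V E v"
  shows "additive_chromatic (join_K1_V V) (join_K1_E V E) = additive_chromatic V E"
proof -
  have "(\<exists>g. additive_coloring (join_K1_V V) (join_K1_E V E) k g)
          \<longleftrightarrow> (\<exists>f. additive_coloring V E k f)" if "k \<ge> 1" for k
  proof
    assume "\<exists>g. additive_coloring (join_K1_V V) (join_K1_E V E) k g"
    then obtain g where "additive_coloring (join_K1_V V) (join_K1_E V E) k g" ..
    from additive_coloring_join_K1_restrict[OF assms(1) this]
    show "\<exists>f. additive_coloring V E k f" by blast
  next
    assume "\<exists>f. additive_coloring V E k f"
    then obtain f where "additive_coloring V E k f" ..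
    from additive_coloring_join_K1_extend[OF assms this that]
    show "\<exists>g. additive_coloring (join_K1_V V) (join_K1_E V E) k g" by blast
  qed
  then show ?thesis
    unfolding additive_chromatic_def by (simp cong: conj_cong)
qed

end
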